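(* Fix one of the types A, B, D below with its group $G$ of orthogonal transformations of $\mathbb{R}^n$ and its domain $C\subset\mathbb{R}^n$. Let $(\xi_1,\dots,\xi_n)$ be a tuple of random vectors in $\mathbb{R}^d$ satisfying all assumptions of that type except possibly the general position assumption, with associated convex hull $H_{n,d}$, and let $A$ be the random $d\times n$ matrix with columns $\xi_1,\dots,\xi_n$, viewed as a linear map $\mathbb{R}^n\to\mathbb{R}^d$. Then for every $g\in G$, $$\mathbb{P}[0\in H_{n,d}]=\mathbb{P}[\ker A\cap(g\bar C)\neq\{0\}].$$
   Context: $e_1,\dots,e_n$ is the standard basis of $\mathbb{R}^n$ and $\bar C$ the closure of $C$. For a tuple $(\xi_1,\dots,\xi_n)$ of random vectors in $\mathbb{R}^d$, put $S_k=\xi_1+\dots+\xi_k$ and $S_n^*=S_{n-1}-\xi_n$. Type A: $n\ge d+1$; the tuple is exchangeable ($(\xi_1,\dots,\xi_n)\stackrel{d}{=}(\xi_{\sigma(1)},\dots,\xi_{\sigma(n)})$ for all permutations $\sigma$); $S_n=0$ a.s.; general position assumption: any $d$ vectors among $S_1,\dots,S_{n-1}$ are linearly independent a.s.; $H_{n,d}=\mathrm{Conv}(S_1,\dots,S_{n-1})$; $G$ consists of the maps $g_\sigma(e_k)=e_{\sigma(k)}$, $\sigma$ a permutation of $\{1,\dots,n\}$; $C=\{x\in\mathbb{R}^n:x_1<\dots<x_n,\ x_1+\dots+x_n=0\}$. Type B: $n\ge d$; $(\xi_1,\dots,\xi_n)\stackrel{d}{=}(\varepsilon_1\xi_{\sigma(1)},\dots,\varepsilon_n\xi_{\sigma(n)})$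 for all permutations $\sigma$ and all signs $\varepsilon_i\in\{-1,1\}$; general position assumption: any $d$ vectors among $S_1,\dots,S_n$ are linearly independent a.s.; $H_{n,d}=\mathrm{Conv}(S_1,\dots,S_n)$; $G$ consists of the maps $g_{\sigma,\varepsilon}(e_k)=\varepsilon_ke_{\sigma(k)}$ with $\sigma$ a permutation and $\varepsilon\in\{-1,1\}^n$; $C=\{x:0<x_1<\dots<x_n\}$. Type D: $n\ge\max\{2,d\}$; the same invariance as type B but only for signs with $\varepsilon_1\cdots\varepsilon_n=1$; general position assumption: any $d$ vectors from either collection $S_1,\dots,S_n$ or $S_1,\dots,S_{n-1},S_n^*$ are linearly independent a.s.; $H_{n,d}=\mathrm{Conv}(S_1,\dots,S_n,S_n^* )$; $G$ consists of the maps $g_{\sigma,\varepsilon}$ with $\varepsilon_1\cdots\varepsilon_n=1$; $C=\{x:0<|x_1|<x_2<\dots<x_n\}$. *)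

theory Defs
  imports "HOL-Probability.Probability"
begin

datatype rtype = TypeA | TypeB | TypeD

text \<open>Vectors of R^n are represented as functions nat => real supported on {1..n}
  (coordinates x 1, ..., x n); the topology is the product topology.\<close>
definition Rn :: "nat \<Rightarrow> (nat \<Rightarrow> real) set" where
  "Rn n = {x. \<forall>i. i \<notin> {1..n} \<longrightarrow> x i = 0}"

definition psum :: "(nat \<Rightarrow> 'w \<Rightarrow> real^'d) \<Rightarrow> nat \<Rightarrow> 'w \<Rightarrow> real^'d" where
  "psum \<xi> k \<omega> = (\<Sum>i=1..k. \<xi> i \<omega>)"

definition psum_star :: "(nat \<Rightarrow> 'w \<Rightarrow> real^'d) \<Rightarrow> nat \<Rightarrow> 'w \<Rightarrow> real^'d" where
  "psum_star \<xi> n \<omega> = psum \<xi> (n - 1) \<omega> - \<xi> n \<omega>"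

text \<open>Admissible sign vectors for each type (only values on {1..n} matter).\<close>
definition admissible_signs :: "rtype \<Rightarrow> nat \<Rightarrow> (nat \<Rightarrow> real) \<Rightarrow> bool" where
  "admissible_signs t n \<epsilon> \<longleftrightarrow>
     (\<forall>i\<in>{1..n}. \<epsilon> i \<in> {-1, 1}) \<and>
     (t = TypeA \<longrightarrow> (\<forall>i\<in>{1..n}. \<epsilon> i = 1)) \<and>
     (t = TypeD \<longrightarrow> (\<Prod>i=1..n. \<epsilon> i) = 1)"

definition joint_law :: "'w measure \<Rightarrow> nat \<Rightarrow> (nat \<Rightarrow> 'w \<Rightarrow> real^'d) \<Rightarrow> (nat \<Rightarrow> real^'d) measure" where
  "joint_law M n \<xi> = distr M (PiM {1..n} (\<lambda>_. borel)) (\<lambda>\<omega>. restrict (\<lambda>i. \<xi> i \<omega>) {1..n})"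

text \<open>All assumptions of the given type except the general position assumption.\<close>
definition type_assms :: "rtype \<Rightarrow> 'w measure \<Rightarrow> nat \<Rightarrow> (nat \<Rightarrow> 'w \<Rightarrow> real^'d) \<Rightarrow> bool" where
  "type_assms t M n \<xi> \<longleftrightarrow>
     prob_space M \<and>
     (\<forall>i\<in>{1..n}. \<xi> i \<in> borel_measurable M) \<and>
     (case t of
        TypeA \<Rightarrow> n \<ge> CARD('d) + 1
      | TypeB \<Rightarrow> n \<ge> CARD('d)
      | TypeD \<Rightarrow> n \<ge> max 2 CARD('d)) \<and>
     (\<forall>\<sigma> \<epsilon>. \<sigma> permutes {1..n} \<longrightarrow> admissible_signs t n \<epsilon> \<longrightarrow>
        joint_law M n \<xi> = joint_law M n (\<lambda>i \<omega>. \<epsilon> i *\<^sub>R \<xi> (\<sigma> i) \<omega>)) \<and>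
     (t = TypeA \<longrightarrow> (AE \<omega> in M. psum \<xi> n \<omega> = 0))"

definition hull_pts :: "rtype \<Rightarrow> nat \<Rightarrow> (nat \<Rightarrow> 'w \<Rightarrow> real^'d) \<Rightarrow> 'w \<Rightarrow> (real^'d) set" where
  "hull_pts t n \<xi> \<omega> = (case t of
      TypeA \<Rightarrow> convex hull ((\<lambda>k. psum \<xi> k \<omega>) ` {1..n-1})
    | TypeB \<Rightarrow> convex hull ((\<lambda>k. psum \<xi> k \<omega>) ` {1..n})
    | TypeD \<Rightarrow> convex hull (insert (psum_star \<xi> n \<omega>) ((\<lambda>k. psum \<xi> k \<omega>) ` {1..n})))"

text \<open>The orthogonal map g_{sigma,eps}: e_k |-> eps_k e_{sigma(k)}.\<close>
definition gmap :: "nat \<Rightarrow> (nat \<Rightarrow> nat) \<Rightarrow> (nat \<Rightarrow> real) \<Rightarrow> (nat \<Rightarrow> real) \<Rightarrow> (nat \<Rightarrow> real)" where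
  "gmap n \<sigma> \<epsilon> x = (\<lambda>j. if j \<in> {1..n}
      then \<epsilon> (inv_into {1..n} \<sigma> j) * x (inv_into {1..n} \<sigma> j) else 0)"

definition Grp :: "rtype \<Rightarrow> nat \<Rightarrow> ((nat \<Rightarrow> real) \<Rightarrow> (nat \<Rightarrow> real)) set" where
  "Grp t n = {gmap n \<sigma> \<epsilon> | \<sigma> \<epsilon>. \<sigma> permutes {1..n} \<and> admissible_signs t n \<epsilon>}"

definition chamber :: "rtype \<Rightarrow> nat \<Rightarrow> (nat \<Rightarrow> real) set" where
  "chamber t n = {x \<in> Rn n. (\<forall>i\<in>{1..<n}. x i < x (Suc i)) \<and>
      (case t of
         TypeA \<Rightarrow> (\<Sum>i=1..n. x i) = 0
       | TypeB \<Rightarrow> 0 < x 1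
       | TypeD \<Rightarrow> 0 < \<bar>x 1\<bar> \<and> (n \<ge> 2 \<longrightarrow> \<bar>x 1\<bar> < x 2))}"

definition kerA :: "nat \<Rightarrow> (nat \<Rightarrow> 'w \<Rightarrow> real^'d) \<Rightarrow> 'w \<Rightarrow> (nat \<Rightarrow> real) set" where
  "kerA n \<xi> \<omega> = {x \<in> Rn n. (\<Sum>i=1..n. x i *\<^sub>R \<xi> i \<omega>) = 0}"

end

theory Submission
  imports Defs
begin

text \<open>
  Both probabilities are probabilities of events ``some nonzero vector of a closed cone \<open>K\<close>
  lies in the kernel of \<open>A\<close>''. By Abel summation, a convex combination \<open>\<Sum>k u\<^sub>k S\<^sub>k\<close>
  of the partial sums equals \<open>\<Sum>i x\<^sub>i \<xi>\<^sub>i\<close> with the tail sums \<open>x\<^sub>i = \<Sum>k\<ge>i u\<^sub>k\<close>; the tail-sum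
  vectors form the closed chamber \<open>C\<close> with its coordinates reversed (for type \<open>D\<close> after
  adding a multiple of the coefficient vector of \<open>S\<^sub>n\<^sup>*\<close>; for type \<open>A\<close> only almost surely,
  after shifting by a constant, which is harmless since \<open>S\<^sub>n = 0\<close>). So \<open>0 \<in> H\<^sub>n\<^sub>,\<^sub>d\<close> iff
  \<open>ker A\<close> meets \<open>\<rho> C\<close> nontrivially, where \<open>\<rho> \<in> G\<close> reverses the coordinates. For any
  \<open>g \<in> G\<close> the event \<open>ker A \<inter> g C \<noteq> {0}\<close> is the event \<open>ker (A g) \<inter> C \<noteq> {0}\<close>, and \<open>A g\<close>
  has the same law as \<open>A\<close> by the invariance assumption.
\<close>

definition lincomb :: "nat \<Rightarrow> (nat \<Rightarrow> real) \<Rightarrow> (nat \<Rightarrow> 'a::real_vector) \<Rightarrow> 'a" where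
  "lincomb n x v = (\<Sum>i=1..n. x i *\<^sub>R v i)"

definition kernel_meets :: "nat \<Rightarrow> (nat \<Rightarrow> real) set \<Rightarrow> (nat \<Rightarrow> 'a::real_vector) set" where
  "kernel_meets n K = {v. \<exists>x\<in>K. x \<noteq> (\<lambda>_. 0) \<and> lincomb n x v = 0}"

lemma lincomb_restrict [simp]: "lincomb n x (restrict v {1..n}) = lincomb n x v"
  unfolding lincomb_def by (intro sum.cong) auto

lemma restrict_in_kernel_meets_iff [simp]:
  "restrict v {1..n} \<in> kernel_meets n K \<longleftrightarrow> v \<in> kernel_meets n K"
  unfolding kernel_meets_def mem_Collect_eq lincomb_restrict ..

lemma lincomb_scale: "lincomb n (\<lambda>i. c * x i) v = c *\<^sub>R lincomb n x v"
  unfolding lincomb_def by (simp add: scaleR_sum_right)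

lemma lincomb_add: "lincomb n (\<lambda>i. x i + y i) v = lincomb n x v + lincomb n y v"
  unfolding lincomb_def by (simp add: scaleR_add_left sum.distrib)

lemma lincomb_shift:
  "lincomb n (\<lambda>i. if i \<in> {1..n} then x i - c else 0) v = lincomb n x v - c *\<^sub>R (\<Sum>i=1..n. v i)"
proof -
  have "lincomb n (\<lambda>i. if i \<in> {1..n} then x i - c else 0) v = (\<Sum>i=1..n. x i *\<^sub>R v i - c *\<^sub>R v i)"
    unfolding lincomb_def by (intro sum.cong) (auto simp: scaleR_diff_left)
  then show ?thesis unfolding lincomb_def by (simp add: sum_subtractf scaleR_sum_right)
qed

lemma lincomb_last_zero:
  assumes "1 \<le> n" "x n = 0"
  shows "lincomb n x v = lincomb (n - 1) x v"
proof -
  obtain m where "n = Suc m" using assms(1) by (cases n) auto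
  then show ?thesis using assms(2) unfolding lincomb_def by simp
qed

lemma Rn_mono: "m \<le> n \<Longrightarrow> Rn m \<subseteq> Rn n"
  unfolding Rn_def by auto

lemma lincomb_in_kerA_iff: "x \<in> kerA n \<xi> \<omega> \<longleftrightarrow> x \<in> Rn n \<and> lincomb n x (\<lambda>i. \<xi> i \<omega>) = 0"
  unfolding kerA_def lincomb_def by simp

lemma kerA_inter_nontrivial_iff:
  assumes "(\<lambda>_. 0) \<in> S" "S \<subseteq> Rn n"
  shows "kerA n \<xi> \<omega> \<inter> S \<noteq> {\<lambda>_. 0} \<longleftrightarrow> (\<lambda>i. \<xi> i \<omega>) \<in> kernel_meets n S"
proof -
  have "(\<lambda>_. 0) \<in> kerA n \<xi> \<omega>" unfolding kerA_def Rn_def by simp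
  then have "kerA n \<xi> \<omega> \<inter> S \<noteq> {\<lambda>_. 0} \<longleftrightarrow> (\<exists>x\<in>S. x \<noteq> (\<lambda>_. 0) \<and> x \<in> kerA n \<xi> \<omega>)"
    using assms(1) by blast
  also have "\<dots> \<longleftrightarrow> (\<exists>x\<in>S. x \<noteq> (\<lambda>_. 0) \<and> lincomb n x (\<lambda>i. \<xi> i \<omega>) = 0)"
    using assms(2) unfolding lincomb_in_kerA_iff by blast
  finally show ?thesis unfolding kernel_meets_def by simp
qed

section \<open>Measurability of the kernel event for closed cones\<close>

definition Rn_closed_cone :: "nat \<Rightarrow> (nat \<Rightarrow> real) set \<Rightarrow> bool" where
  "Rn_closed_cone n K \<longleftrightarrow> closed K \<and> K \<subseteq> Rn n \<and> (\<forall>x\<in>K. \<forall>c>0. (\<lambda>i. c * x i) \<in> K)"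

lemma continuous_on_lincomb:
  "continuous_on UNIV (\<lambda>x. lincomb n x (v :: nat \<Rightarrow> 'a::real_normed_vector))"
  unfolding lincomb_def by (intro continuous_intros) (auto intro: continuous_on_product_coordinates)

lemma lincomb_measurable:
  "(\<lambda>v. lincomb n x v) \<in> borel_measurable (PiM {1..n} (\<lambda>_. borel :: 'a::euclidean_space measure))"
  unfolding lincomb_def by measurable

lemma Rn_nonzero_abs_sum_pos:
  assumes "x \<in> Rn n" "x \<noteq> (\<lambda>_. 0)" shows "0 < (\<Sum>i=1..n. \<bar>x i\<bar>)"
proof -
  obtain i where i: "x i \<noteq> 0" using assms(2) by auto
  then have "i \<in> {1..n}" using assms(1) unfolding Rn_def by auto
  then show ?thesis using i by (intro sum_pos2[of _ i]) auto
qed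

lemma closed_Rn: "closed (Rn n)"
  unfolding Rn_def by (intro closed_Collect_all closed_Collect_imp closed_Collect_eq)
    (auto intro: continuous_on_product_coordinates)

lemma compact_Rn_abs_sum_le:
  "compact {x \<in> Rn n. (\<Sum>i=1..n. \<bar>x i\<bar>) \<le> c}"
proof -
  define S where "S = (\<lambda>i::nat. if i \<in> {1..n} then {-c..c} else {0::real})"
  have "compactin (product_topology (\<lambda>_. euclidean) UNIV) (PiE UNIV S)"
    unfolding compactin_PiE S_def by auto
  then have "compact (PiE UNIV S)"
    by (simp add: euclidean_product_topology)
  moreover have "closed (Rn n \<inter> {x. (\<Sum>i=1..n. \<bar>x i\<bar>) \<le> c})"
    by (intro closed_Int closed_Rn closed_Collect_le continuous_intros continuous_on_product_coordinates)
  moreover have "{x \<in> Rn n. (\<Sum>i=1..n. \<bar>x i\<bar>) \<le> c} \<subseteq> PiE UNIV S"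
  proof
    fix x assume x: "x \<in> {x \<in> Rn n. (\<Sum>i=1..n. \<bar>x i\<bar>) \<le> c}"
    have "x i \<in> S i" for i
    proof (cases "i \<in> {1..n}")
      case True
      then have "\<bar>x i\<bar> \<le> c"
        using x order_trans[OF member_le_sum[of i "{1..n}" "\<lambda>i. \<bar>x i\<bar>"]] by auto
      then show ?thesis using True unfolding S_def by (simp add: abs_le_iff)
    next
      case False
      have "x \<in> Rn n" using x by simp
      then have "x i = 0" using False unfolding Rn_def by simp
      then show ?thesis unfolding S_def if_not_P[OF False] by simp
    qed
    then show "x \<in> PiE UNIV S" unfolding PiE_UNIV_domain Pi_iff by simp
  qed
  ultimately show ?thesis
    using compact_Int_closed[of "PiE UNIV S" "Rn n \<inter> {x. (\<Sum>i=1..n. \<bar>x i\<bar>) \<le> c}"]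
    by (simp add: Int_absorb1 Collect_conj_eq)
qed

lemma compact_Rn_closed_cone_slice:
  assumes "Rn_closed_cone n K"
  shows "compact {x \<in> K. (\<Sum>i=1..n. \<bar>x i\<bar>) = 1}" (is "compact ?S")
proof -
  have sub: "?S \<subseteq> {x \<in> Rn n. (\<Sum>i=1..n. \<bar>x i\<bar>) \<le> 1}"
    using assms unfolding Rn_closed_cone_def by auto
  have "closed ?S"
    using assms unfolding Collect_conj_eq Collect_mem_eq Rn_closed_cone_def
    by (intro closed_Int closed_Collect_eq continuous_on_const continuous_on_sum
        continuous_on_rabs continuous_on_product_coordinates) simp_all
  then have "compact ({x \<in> Rn n. (\<Sum>i=1..n. \<bar>x i\<bar>) \<le> 1} \<inter> ?S)"
    by (rule compact_Int_closed[OF compact_Rn_abs_sum_le])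
  then show ?thesis unfolding Int_absorb1[OF sub] .
qed

lemma kernel_meets_normalized:
  assumes "K \<subseteq> Rn n" "\<And>x c. x \<in> K \<Longrightarrow> 0 < c \<Longrightarrow> (\<lambda>i. c * x i) \<in> K"
  shows "v \<in> kernel_meets n K \<longleftrightarrow> (\<exists>x\<in>K. (\<Sum>i=1..n. \<bar>x i\<bar>) = 1 \<and> lincomb n x v = 0)"
proof
  assume "v \<in> kernel_meets n K"
  then obtain x where x: "x \<in> K" "x \<noteq> (\<lambda>_. 0)" "lincomb n x v = 0"
    unfolding kernel_meets_def by auto
  define s where "s = (\<Sum>i=1..n. \<bar>x i\<bar>)"
  have "0 < s" unfolding s_def using Rn_nonzero_abs_sum_pos x assms(1) by auto
  then have "(\<lambda>i. (1/s) * x i) \<in> K" "(\<Sum>i=1..n. \<bar>(1/s) * x i\<bar>) = 1"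
    using assms(2)[OF x(1), of "1/s"] by (auto simp: abs_mult sum_divide_distrib[symmetric] s_def)
  then show "\<exists>x\<in>K. (\<Sum>i=1..n. \<bar>x i\<bar>) = 1 \<and> lincomb n x v = 0"
    using x(3) lincomb_scale[of n "1/s" x v] by (intro bexI[of _ "\<lambda>i. (1/s) * x i"]) auto
next
  assume "\<exists>x\<in>K. (\<Sum>i=1..n. \<bar>x i\<bar>) = 1 \<and> lincomb n x v = 0"
  then show "v \<in> kernel_meets n K" unfolding kernel_meets_def by force
qed

text \<open>\<open>K\<close> meets the kernel iff its compact \<open>\<ell>\<^sup>1\<close>-unit slice does, so it suffices to test the
  points of a countable dense subset of the slice with tolerance \<open>1/(j+1)\<close>.\<close>

lemma kernel_meets_countable_approx:
  fixes K :: "(nat \<Rightarrow> real) set"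
  assumes "Rn_closed_cone n K"
  obtains D where "countable D"
    "\<And>v :: nat \<Rightarrow> 'a::real_normed_vector.
       v \<in> kernel_meets n K \<longleftrightarrow> (\<forall>j. \<exists>x\<in>D. norm (lincomb n x v) < inverse (Suc j))"
proof -
  have KR: "K \<subseteq> Rn n" and cone: "\<And>x c. x \<in> K \<Longrightarrow> 0 < c \<Longrightarrow> (\<lambda>i. c * x i) \<in> K"
    using assms unfolding Rn_closed_cone_def by auto
  define B where "B = {x \<in> K. (\<Sum>i=1..n. \<bar>x i\<bar>) = 1}"
  have seq_B: "seq_compact B"
    unfolding B_def using compact_Rn_closed_cone_slice[OF assms] by (rule compact_imp_seq_compact)
  obtain D where D: "countable D" "D \<subseteq> B" "B \<subseteq> closure D"
    using separable by blast
  have approx: "v \<in> kernel_meets n K \<longleftrightarrow> (\<forall>j. \<exists>x\<in>D. norm (lincomb n x v) < inverse (Suc j))"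
    for v :: "nat \<Rightarrow> 'a"
  proof
    assume "v \<in> kernel_meets n K"
    then obtain x where x: "x \<in> B" "lincomb n x v = 0"
      using kernel_meets_normalized[OF KR cone] unfolding B_def by blast
    show "\<forall>j. \<exists>x\<in>D. norm (lincomb n x v) < inverse (Suc j)"
    proof
      fix j
      define V where "V = {x. norm (lincomb n x v) < inverse (Suc j)}"
      have "open V" unfolding V_def
        by (intro open_Collect_less continuous_on_norm continuous_on_lincomb continuous_on_const)
      moreover have "x \<in> V" unfolding V_def using x(2) by simp
      then have "V \<inter> closure D \<noteq> {}" using x(1) D(3) by blast
      ultimately show "\<exists>x\<in>D. norm (lincomb n x v) < inverse (Suc j)"
        unfolding V_def using open_Int_closure_eq_empty by blast
    qed
  next
    assume "\<forall>j. \<exists>x\<in>D. norm (lincomb n x v) < inverse (Suc j)"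
    then obtain X where XD: "\<And>j. X j \<in> D" and X: "\<And>j. norm (lincomb n (X j) v) < inverse (Suc j)"
      by metis
    have "\<forall>j. X j \<in> B" using XD D(2) by blast
    then obtain x r where x: "x \<in> B" "strict_mono r" "(X \<circ> r) \<longlonglongrightarrow> x"
      by (rule seq_compactE[OF seq_B])
    have "(\<lambda>j. lincomb n (X (r j)) v) \<longlonglongrightarrow> lincomb n x v"
      using continuous_on_tendsto_compose[OF continuous_on_lincomb x(3)] by (simp add: o_def)
    moreover have "(\<lambda>j. lincomb n (X (r j)) v) \<longlonglongrightarrow> 0"
    proof (rule Lim_null_comparison[OF _ LIMSEQ_inverse_real_of_nat])
      have "norm (lincomb n (X (r j)) v) \<le> inverse (Suc j)" for j
      proof -
        have "inverse (real (Suc (r j))) \<le> inverse (Suc j)"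
          using seq_suble[OF x(2), of j] by (simp add: le_imp_inverse_le)
        then show ?thesis using X[of "r j"] by linarith
      qed
      then show "\<forall>\<^sub>F j in sequentially. norm (lincomb n (X (r j)) v) \<le> inverse (Suc j)"
        by simp
    qed
    ultimately have "lincomb n x v = 0" using LIMSEQ_unique by blast
    then show "v \<in> kernel_meets n K"
      using x(1) kernel_meets_normalized[OF KR cone] unfolding B_def by blast
  qed
  show ?thesis by (rule that[OF D(1) approx])
qed

lemma sets_kernel_meets:
  assumes "Rn_closed_cone n K"
  defines "N \<equiv> PiM {1..n} (\<lambda>_. borel :: 'a::euclidean_space measure)"
  shows "kernel_meets n K \<inter> space N \<in> sets N"
proof -
  obtain D where D: "countable D"
    "\<And>v :: nat \<Rightarrow> 'a. v \<in> kernel_meets n K \<longleftrightarrow> (\<forall>j. \<exists>x\<in>D. norm (lincomb n x v) < inverse (Suc j))"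
    using kernel_meets_countable_approx[OF assms(1)] by blast
  have "{v \<in> space N. norm (lincomb n x v) < inverse (Suc j)} \<in> sets N" for x j
    using measurable_compose[OF lincomb_measurable borel_measurable_norm] unfolding N_def
    by (intro borel_measurable_less borel_measurable_const)
  then have "{v \<in> space N. \<forall>j. \<exists>x\<in>D. norm (lincomb n x v) < inverse (Suc j)} \<in> sets N"
    using D(1) by (intro sets.sets_Collect_countable_All sets.sets_Collect_countable_Ex')
  moreover have "kernel_meets n K \<inter> space N
      = {v \<in> space N. \<forall>j. \<exists>x\<in>D. norm (lincomb n x v) < inverse (Suc j)}"
    using D(2) by auto
  ultimately show ?thesis by simp
qed

section \<open>The closed chamber\<close>

definition closed_chamber :: "rtype \<Rightarrow> nat \<Rightarrow> (nat \<Rightarrow> real) set" where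
  "closed_chamber t n = {x \<in> Rn n. (\<forall>i\<in>{1..<n}. x i \<le> x (Suc i)) \<and>
      (case t of
         TypeA \<Rightarrow> (\<Sum>i=1..n. x i) = 0
       | TypeB \<Rightarrow> 0 \<le> x 1
       | TypeD \<Rightarrow> \<bar>x 1\<bar> \<le> x 2)}"

lemma closed_chamber_subset_Rn: "closed_chamber t n \<subseteq> Rn n"
  unfolding closed_chamber_def by auto

lemma zero_in_closed_chamber: "(\<lambda>_. 0) \<in> closed_chamber t n"
  unfolding closed_chamber_def Rn_def by (cases t) auto

lemma closed_chamber_scale:
  "x \<in> closed_chamber t n \<Longrightarrow> 0 < c \<Longrightarrow> (\<lambda>i. c * x i) \<in> closed_chamber t n"
  unfolding closed_chamber_def Rn_def
  by (cases t) (auto simp: sum_distrib_left[symmetric] abs_mult)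

lemma closed_closed_chamber: "closed (closed_chamber t n)"
proof -
  define T :: "(nat \<Rightarrow> real) set" where "T = {x. case t of
         TypeA \<Rightarrow> (\<Sum>i=1..n. x i) = 0
       | TypeB \<Rightarrow> 0 \<le> x 1
       | TypeD \<Rightarrow> \<bar>x 1\<bar> \<le> x 2}"
  have "closed T"
    unfolding T_def by (cases t)
      (simp_all add: closed_Collect_eq closed_Collect_le continuous_on_sum continuous_on_rabs
        continuous_on_product_coordinates)
  moreover have "closed_chamber t n = Rn n \<inter> (\<Inter>i\<in>{1..<n}. {x. x i \<le> x (Suc i)}) \<inter> T"
    unfolding closed_chamber_def T_def by auto
  ultimately show ?thesis
    by (simp add: closed_Int closed_Rn closed_INT closed_Collect_le continuous_on_product_coordinates)
qed

lemma Rn_closed_cone_closed_chamber: "Rn_closed_cone n (closed_chamber t n)"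
  unfolding Rn_closed_cone_def
  using closed_closed_chamber closed_chamber_subset_Rn closed_chamber_scale by blast

lemma chamber_subset_closed_chamber:
  "t = TypeD \<longrightarrow> 2 \<le> n \<Longrightarrow> chamber t n \<subseteq> closed_chamber t n"
  unfolding chamber_def closed_chamber_def by (cases t) (auto simp: less_imp_le)

lemma closed_chamber_perturb:
  assumes "1 \<le> n" "t = TypeD \<longrightarrow> 2 \<le> n" "x \<in> closed_chamber t n"
  obtains w where "\<And>s. 0 < s \<Longrightarrow> (\<lambda>i. x i + s * w i) \<in> chamber t n"
proof -
  define w :: "nat \<Rightarrow> real" where "w = (\<lambda>i. if i \<in> {1..n} then
      (case t of TypeA \<Rightarrow> real i - (\<Sum>k=1..n. real k) / real n
        | TypeB \<Rightarrow> real i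
        | TypeD \<Rightarrow> (if i = 1 \<and> x 1 < 0 then -1 else real i)) else 0)"
  have "(\<lambda>i. x i + s * w i) \<in> chamber t n" if s: "0 < s" for s
  proof -
    define y where "y = (\<lambda>i. x i + s * w i)"
    have "y \<in> Rn n" using assms(3) unfolding y_def w_def closed_chamber_def Rn_def by auto
    moreover have "y i < y (Suc i)" if "i \<in> {1..<n}" for i
    proof -
      have "x i \<le> x (Suc i)" using assms(3) that unfolding closed_chamber_def by auto
      moreover have "w i < w (Suc i)" using that unfolding w_def by (cases t) auto
      ultimately show ?thesis using s unfolding y_def by (simp add: add_le_less_mono mult_strict_left_mono)
    qed
    moreover have "case t of
         TypeA \<Rightarrow> (\<Sum>i=1..n. y i) = 0
       | TypeB \<Rightarrow> 0 < y 1
       | TypeD \<Rightarrow> 0 < \<bar>y 1\<bar> \<and> (n \<ge> 2 \<longrightarrow> \<bar>y 1\<bar> < y 2)"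
    proof (cases t)
      case TypeA
      have "(\<Sum>i=1..n. w i) = (\<Sum>i=1..n. real i) - real n * ((\<Sum>k=1..n. real k) / real n)"
        unfolding w_def using TypeA by (simp add: sum_subtractf)
      also have "\<dots> = 0" using assms(1) by simp
      finally show ?thesis using assms(3) TypeA unfolding y_def closed_chamber_def
        by (simp add: sum.distrib sum_distrib_left[symmetric])
    next
      case TypeB
      then show ?thesis using assms s unfolding y_def w_def closed_chamber_def by auto
    next
      case TypeD
      then show ?thesis using assms s unfolding y_def w_def closed_chamber_def by (auto simp: abs_if)
    qed
    ultimately show ?thesis unfolding chamber_def y_def[symmetric] by (cases t) auto
  qed
  then show ?thesis by (rule that)
qed

lemma closed_chamber_subset_closure:
  assumes "1 \<le> n" "t = TypeD \<longrightarrow> 2 \<le> n"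
  shows "closed_chamber t n \<subseteq> closure (chamber t n)"
proof
  fix x assume x: "x \<in> closed_chamber t n"
  obtain w where w: "\<And>s. 0 < s \<Longrightarrow> (\<lambda>i. x i + s * w i) \<in> chamber t n"
    using closed_chamber_perturb[OF assms x] by blast
  define F where "F = (\<lambda>s::real. \<lambda>i. x i + s * w i)"
  have "continuous_on UNIV F" unfolding F_def
    by (intro continuous_on_coordinatewise_then_product continuous_intros)
  then have "(\<lambda>j. F (inverse (Suc j))) \<longlonglongrightarrow> F 0"
    by (intro continuous_on_tendsto_compose[OF _ LIMSEQ_inverse_real_of_nat]) auto
  moreover have "F (inverse (Suc j)) \<in> chamber t n" for j unfolding F_def by (intro w) simp
  moreover have "F 0 = x" unfolding F_def by simp
  ultimately show "x \<in> closure (chamber t n)" unfolding closure_sequential by metis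
qed

lemma closure_chamber:
  assumes "1 \<le> n" "t = TypeD \<longrightarrow> 2 \<le> n"
  shows "closure (chamber t n) = closed_chamber t n"
  using closure_minimal[OF chamber_subset_closed_chamber[OF assms(2)] closed_closed_chamber]
    closed_chamber_subset_closure[OF assms] by blast

section \<open>The action of \<open>G\<close>\<close>

lemma gmap_apply:
  assumes "\<sigma> permutes {1..n}" "i \<in> {1..n}"
  shows "gmap n \<sigma> \<epsilon> z (\<sigma> i) = \<epsilon> i * z i"
proof -
  have "\<sigma> i \<in> {1..n}" using permutes_in_image[OF assms(1)] assms(2) by blast
  moreover have "inv_into {1..n} \<sigma> (\<sigma> i) = i"
    using assms permutes_inj_on inv_into_f_f by metis
  ultimately show ?thesis unfolding gmap_def by simp
qed

lemma gmap_in_Rn: "gmap n \<sigma> \<epsilon> z \<in> Rn n"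
  unfolding gmap_def Rn_def by auto

lemma gmap_zero: "gmap n \<sigma> \<epsilon> (\<lambda>_. 0) = (\<lambda>_. 0)"
  unfolding gmap_def by auto

lemma gmap_eq_zero_iff:
  assumes "\<sigma> permutes {1..n}" "\<forall>i\<in>{1..n}. \<epsilon> i \<noteq> 0" "z \<in> Rn n"
  shows "gmap n \<sigma> \<epsilon> z = (\<lambda>_. 0) \<longleftrightarrow> z = (\<lambda>_. 0)"
proof
  assume g: "gmap n \<sigma> \<epsilon> z = (\<lambda>_. 0)"
  have "z i = 0" for i
  proof (cases "i \<in> {1..n}")
    case True
    then show ?thesis using gmap_apply[OF assms(1) True, of \<epsilon> z] g assms(2) by simp
  next
    case False
    then show ?thesis using assms(3) unfolding Rn_def by simp
  qed
  then show "z = (\<lambda>_. 0)" by blast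
qed (simp add: gmap_zero)

lemma lincomb_gmap:
  assumes "\<sigma> permutes {1..n}"
  shows "lincomb n (gmap n \<sigma> \<epsilon> z) v = lincomb n z (\<lambda>i. \<epsilon> i *\<^sub>R v (\<sigma> i))"
proof -
  have "lincomb n (gmap n \<sigma> \<epsilon> z) v = (\<Sum>i=1..n. gmap n \<sigma> \<epsilon> z (\<sigma> i) *\<^sub>R v (\<sigma> i))"
    unfolding lincomb_def
    using sum.reindex_bij_betw[OF permutes_imp_bij[OF assms], of "\<lambda>j. gmap n \<sigma> \<epsilon> z j *\<^sub>R v j"]
    by simp
  also have "\<dots> = lincomb n z (\<lambda>i. \<epsilon> i *\<^sub>R v (\<sigma> i))"
    unfolding lincomb_def by (intro sum.cong refl) (simp add: gmap_apply[OF assms] mult.commute)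
  finally show ?thesis .
qed

lemma kernel_meets_gmap_image:
  assumes "\<sigma> permutes {1..n}" "\<forall>i\<in>{1..n}. \<epsilon> i \<noteq> 0" "K \<subseteq> Rn n"
  shows "v \<in> kernel_meets n (gmap n \<sigma> \<epsilon> ` K) \<longleftrightarrow> (\<lambda>i. \<epsilon> i *\<^sub>R v (\<sigma> i)) \<in> kernel_meets n K"
proof -
  have "v \<in> kernel_meets n (gmap n \<sigma> \<epsilon> ` K) \<longleftrightarrow>
      (\<exists>z\<in>K. gmap n \<sigma> \<epsilon> z \<noteq> (\<lambda>_. 0) \<and> lincomb n (gmap n \<sigma> \<epsilon> z) v = 0)"
    unfolding kernel_meets_def by blast
  also have "\<dots> \<longleftrightarrow> (\<exists>z\<in>K. z \<noteq> (\<lambda>_. 0) \<and> lincomb n z (\<lambda>i. \<epsilon> i *\<^sub>R v (\<sigma> i)) = 0)"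
  proof (rule bex_cong[OF refl])
    fix z assume "z \<in> K"
    then show "gmap n \<sigma> \<epsilon> z \<noteq> (\<lambda>_. 0) \<and> lincomb n (gmap n \<sigma> \<epsilon> z) v = 0 \<longleftrightarrow>
        z \<noteq> (\<lambda>_. 0) \<and> lincomb n z (\<lambda>i. \<epsilon> i *\<^sub>R v (\<sigma> i)) = 0"
      by (simp add: gmap_eq_zero_iff[OF assms(1,2) subsetD[OF assms(3)]] lincomb_gmap[OF assms(1)])
  qed
  finally show ?thesis unfolding kernel_meets_def by simp
qed

definition reversal :: "nat \<Rightarrow> nat \<Rightarrow> nat" where
  "reversal n i = (if i \<in> {1..n} then Suc n - i else i)"

lemma reversal_permutes: "reversal n permutes {1..n}"
proof (rule bij_imp_permutes)
  show "bij_betw (reversal n) {1..n} {1..n}"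
    by (rule bij_betw_byWitness[of _ "reversal n"]) (auto simp: reversal_def)
qed (auto simp: reversal_def)

definition reverse_coords :: "nat \<Rightarrow> (nat \<Rightarrow> real) \<Rightarrow> nat \<Rightarrow> real" where
  "reverse_coords n z j = (if j \<in> {1..n} then z (Suc n - j) else 0)"

lemma reverse_coords_in_Rn: "reverse_coords n z \<in> Rn n"
  unfolding reverse_coords_def Rn_def by simp

lemma reverse_coords_reverse_coords: "z \<in> Rn n \<Longrightarrow> reverse_coords n (reverse_coords n z) = z"
  unfolding reverse_coords_def Rn_def by (auto simp: fun_eq_iff)

lemma reverse_coords_antitone_iff:
  "(\<forall>i\<in>{1..<n}. reverse_coords n z (Suc i) \<le> reverse_coords n z i) \<longleftrightarrow> (\<forall>i\<in>{1..<n}. z i \<le> z (Suc i))"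
proof
  assume H: "\<forall>i\<in>{1..<n}. reverse_coords n z (Suc i) \<le> reverse_coords n z i"
  show "\<forall>i\<in>{1..<n}. z i \<le> z (Suc i)"
  proof
    fix i assume "i \<in> {1..<n}"
    then have "n - i \<in> {1..<n}" "Suc n - Suc (n - i) = i" "Suc n - (n - i) = Suc i" by auto
    then show "z i \<le> z (Suc i)" using H[rule_format, of "n - i"] unfolding reverse_coords_def by simp
  qed
next
  assume H: "\<forall>i\<in>{1..<n}. z i \<le> z (Suc i)"
  show "\<forall>i\<in>{1..<n}. reverse_coords n z (Suc i) \<le> reverse_coords n z i"
  proof
    fix i assume "i \<in> {1..<n}"
    then have "n - i \<in> {1..<n}" "Suc n - Suc i = n - i" "Suc n - i = Suc (n - i)" by auto
    then show "reverse_coords n z (Suc i) \<le> reverse_coords n z i"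
      using H[rule_format, of "n - i"] \<open>i \<in> {1..<n}\<close> unfolding reverse_coords_def by simp
  qed
qed

lemma sum_reverse_coords: "(\<Sum>i=1..n. reverse_coords n z i) = (\<Sum>i=1..n. z i)"
proof -
  have "(\<Sum>i=1..n. reverse_coords n z i) = (\<Sum>i=1..n. z (reversal n i))"
    unfolding reverse_coords_def reversal_def by (intro sum.cong) auto
  then show ?thesis
    using sum.reindex_bij_betw[OF permutes_imp_bij[OF reversal_permutes], of z n] by simp
qed

lemma gmap_reversal: "gmap n (reversal n) (\<lambda>_. 1) = reverse_coords n"
proof -
  have "inv_into {1..n} (reversal n) j = Suc n - j" if "j \<in> {1..n}" for j
  proof (rule inv_into_f_eq)
    show "inj_on (reversal n) {1..n}" using permutes_inj_on[OF reversal_permutes] .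
  qed (use that in \<open>auto simp: reversal_def\<close>)
  then show ?thesis unfolding gmap_def reverse_coords_def by (auto simp: fun_eq_iff)
qed

definition rev_chamber :: "rtype \<Rightarrow> nat \<Rightarrow> (nat \<Rightarrow> real) set" where
  "rev_chamber t n = {x \<in> Rn n. (\<forall>i\<in>{1..<n}. x (Suc i) \<le> x i) \<and>
      (case t of
         TypeA \<Rightarrow> (\<Sum>i=1..n. x i) = 0
       | TypeB \<Rightarrow> 0 \<le> x n
       | TypeD \<Rightarrow> \<bar>x n\<bar> \<le> x (n - 1))}"

lemma gmap_reversal_closed_chamber:
  assumes "1 \<le> n" "t = TypeD \<longrightarrow> 2 \<le> n"
  shows "gmap n (reversal n) (\<lambda>_. 1) ` closed_chamber t n = rev_chamber t n"
proof -
  let ?r = "reverse_coords n"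
  have ends: "?r z n = z 1" "?r z 1 = z n" for z
    using assms(1) unfolding reverse_coords_def by auto
  have ends2: "?r z (n - 1) = z 2" "?r z 2 = z (n - 1)" if "2 \<le> n" for z
    using that unfolding reverse_coords_def by (auto simp: Suc_diff_le numeral_2_eq_2)
  have into: "?r z \<in> rev_chamber t n" if "z \<in> closed_chamber t n" for z
    using that reverse_coords_in_Rn reverse_coords_antitone_iff[of n z] sum_reverse_coords[of n z]
      ends ends2 assms(2)
    unfolding closed_chamber_def rev_chamber_def by (cases t) auto
  have onto: "x \<in> ?r ` closed_chamber t n" if "x \<in> rev_chamber t n" for x
  proof -
    have xR: "x \<in> Rn n" using that unfolding rev_chamber_def by simp
    have "?r x \<in> closed_chamber t n"
      using that reverse_coords_in_Rn reverse_coords_antitone_iff[of n "?r x"] sum_reverse_coords[of n x]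
        ends ends2 assms(2) reverse_coords_reverse_coords[OF xR]
      unfolding closed_chamber_def rev_chamber_def by (cases t) auto
    then show ?thesis using reverse_coords_reverse_coords[OF xR] by (metis image_eqI)
  qed
  show ?thesis unfolding gmap_reversal using into onto by blast
qed

section \<open>Invariance of the kernel probability\<close>

lemma kernel_meets_event:
  fixes \<eta> :: "nat \<Rightarrow> 'w \<Rightarrow> real^'d"
  assumes "\<forall>i\<in>{1..n}. \<eta> i \<in> borel_measurable M" "Rn_closed_cone n K"
  shows "{\<omega>\<in>space M. (\<lambda>i. \<eta> i \<omega>) \<in> kernel_meets n K} \<in> sets M"
    and "measure M {\<omega>\<in>space M. (\<lambda>i. \<eta> i \<omega>) \<in> kernel_meets n K}
       = measure (joint_law M n \<eta>) (kernel_meets n K \<inter> space (PiM {1..n} (\<lambda>_. borel)))"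
proof -
  define N where "N = PiM {1..n} (\<lambda>_. borel :: (real^'d) measure)"
  define E where "E = kernel_meets n K \<inter> space N"
  have E: "E \<in> sets N"
    unfolding E_def N_def by (rule sets_kernel_meets[OF assms(2)])
  have X: "(\<lambda>\<omega>. restrict (\<lambda>i. \<eta> i \<omega>) {1..n}) \<in> measurable M N"
    unfolding N_def using assms(1) by (intro measurable_restrict) simp
  have event: "{\<omega>\<in>space M. (\<lambda>i. \<eta> i \<omega>) \<in> kernel_meets n K}
      = (\<lambda>\<omega>. restrict (\<lambda>i. \<eta> i \<omega>) {1..n}) -` E \<inter> space M"
    unfolding E_def N_def using restrict_in_kernel_meets_iff[of _ n K] by (auto simp: space_PiM)
  show "{\<omega>\<in>space M. (\<lambda>i. \<eta> i \<omega>) \<in> kernel_meets n K} \<in> sets M"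
    unfolding event using measurable_sets[OF X E] .
  show "measure M {\<omega>\<in>space M. (\<lambda>i. \<eta> i \<omega>) \<in> kernel_meets n K}
      = measure (joint_law M n \<eta>) (kernel_meets n K \<inter> space (PiM {1..n} (\<lambda>_. borel)))"
    using measure_distr[OF X E] unfolding event joint_law_def E_def N_def by simp
qed

lemma measurable_signed_permuted:
  fixes \<xi> :: "nat \<Rightarrow> 'w \<Rightarrow> real^'d"
  assumes "\<forall>i\<in>{1..n}. \<xi> i \<in> borel_measurable M" "\<sigma> permutes {1..n}"
  shows "\<forall>i\<in>{1..n}. (\<lambda>\<omega>. \<epsilon> i *\<^sub>R \<xi> (\<sigma> i) \<omega>) \<in> borel_measurable M"
proof
  fix i assume "i \<in> {1..n}"
  then have "\<sigma> i \<in> {1..n}" using permutes_in_image[OF assms(2)] by blast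
  then show "(\<lambda>\<omega>. \<epsilon> i *\<^sub>R \<xi> (\<sigma> i) \<omega>) \<in> borel_measurable M"
    using assms(1) by (intro borel_measurable_scaleR borel_measurable_const) blast
qed

lemma kernel_meets_gmap_image_event:
  assumes "\<sigma> permutes {1..n}" "\<forall>i\<in>{1..n}. \<epsilon> i \<noteq> 0" "K \<subseteq> Rn n"
  shows "{\<omega>\<in>space M. (\<lambda>i. \<xi> i \<omega>) \<in> kernel_meets n (gmap n \<sigma> \<epsilon> ` K)}
       = {\<omega>\<in>space M. (\<lambda>i. \<epsilon> i *\<^sub>R \<xi> (\<sigma> i) \<omega>) \<in> kernel_meets n K}"
  using kernel_meets_gmap_image[OF assms] by auto

lemma sets_kernel_meets_gmap_image:
  fixes \<xi> :: "nat \<Rightarrow> 'w \<Rightarrow> real^'d"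
  assumes "\<forall>i\<in>{1..n}. \<xi> i \<in> borel_measurable M" "\<sigma> permutes {1..n}" "\<forall>i\<in>{1..n}. \<epsilon> i \<noteq> 0"
    "Rn_closed_cone n K"
  shows "{\<omega>\<in>space M. (\<lambda>i. \<xi> i \<omega>) \<in> kernel_meets n (gmap n \<sigma> \<epsilon> ` K)} \<in> sets M"
proof -
  have "K \<subseteq> Rn n" using assms(4) unfolding Rn_closed_cone_def by simp
  show ?thesis
    unfolding kernel_meets_gmap_image_event[OF assms(2,3) \<open>K \<subseteq> Rn n\<close>]
    by (rule kernel_meets_event(1)[OF measurable_signed_permuted[OF assms(1,2)] assms(4)])
qed

lemma admissible_signs_nonzero: "admissible_signs t n \<epsilon> \<Longrightarrow> \<forall>i\<in>{1..n}. \<epsilon> i \<noteq> 0"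
  unfolding admissible_signs_def by force

lemma admissible_signs_one: "admissible_signs t n (\<lambda>_. 1)"
  unfolding admissible_signs_def by simp

lemma measure_kernel_meets_gmap_image:
  fixes \<xi> :: "nat \<Rightarrow> 'w \<Rightarrow> real^'d"
  assumes "type_assms t M n \<xi>" "\<sigma> permutes {1..n}" "admissible_signs t n \<epsilon>" "Rn_closed_cone n K"
  shows "measure M {\<omega>\<in>space M. (\<lambda>i. \<xi> i \<omega>) \<in> kernel_meets n (gmap n \<sigma> \<epsilon> ` K)}
       = measure M {\<omega>\<in>space M. (\<lambda>i. \<xi> i \<omega>) \<in> kernel_meets n K}"
proof -
  have meas: "\<forall>i\<in>{1..n}. \<xi> i \<in> borel_measurable M"
    and law: "joint_law M n \<xi> = joint_law M n (\<lambda>i \<omega>. \<epsilon> i *\<^sub>R \<xi> (\<sigma> i) \<omega>)"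
    using assms(1-3) unfolding type_assms_def by auto
  have "K \<subseteq> Rn n" using assms(4) unfolding Rn_closed_cone_def by simp
  show ?thesis
    unfolding kernel_meets_gmap_image_event[OF assms(2) admissible_signs_nonzero[OF assms(3)]
        \<open>K \<subseteq> Rn n\<close>]
      kernel_meets_event(2)[OF measurable_signed_permuted[OF meas assms(2)] assms(4)]
      kernel_meets_event(2)[OF meas assms(4)] law ..
qed

section \<open>Zero in the convex hull of the partial sums\<close>

lemma sum_over_section:
  assumes "finite I"
  shows "(\<Sum>i\<in>I. if i \<in> inv_into I f ` f ` I then g (f i) else 0) = (\<Sum>y\<in>f ` I. g y)"
proof -
  have sub: "inv_into I f ` f ` I \<subseteq> I" by (auto intro: inv_into_into)
  have "(\<Sum>i\<in>I. if i \<in> inv_into I f ` f ` I then g (f i) else 0) = (\<Sum>i\<in>inv_into I f ` f ` I. g (f i))"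
    using sum.inter_restrict[OF assms, of "\<lambda>i. g (f i)", symmetric] sub by (simp add: Int_absorb1)
  also have "\<dots> = (\<Sum>y\<in>f ` I. g (f (inv_into I f y)))"
    by (simp add: sum.reindex inj_on_inv_into)
  also have "\<dots> = (\<Sum>y\<in>f ` I. g y)"
    by (intro sum.cong refl) (simp add: f_inv_into_f)
  finally show ?thesis .
qed

lemma zero_in_convex_hull_image_iff:
  fixes f :: "'i \<Rightarrow> 'a::real_vector"
  assumes "finite I"
  shows "0 \<in> convex hull (f ` I) \<longleftrightarrow>
    (\<exists>u. (\<forall>i\<in>I. 0 \<le> u i) \<and> 0 < sum u I \<and> (\<Sum>i\<in>I. u i *\<^sub>R f i) = 0)"
proof
  assume "0 \<in> convex hull (f ` I)"
  then obtain w where w: "\<forall>y\<in>f ` I. 0 \<le> w y" "sum w (f ` I) = 1" "(\<Sum>y\<in>f ` I. w y *\<^sub>R y) = 0"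
    using convex_hull_finite[of "f ` I"] assms by auto
  \<comment> \<open>put the whole weight of a point on one chosen preimage\<close>
  define u where "u = (\<lambda>i. if i \<in> inv_into I f ` f ` I then w (f i) else 0)"
  have "\<forall>i\<in>I. 0 \<le> u i" unfolding u_def using w(1) by auto
  moreover have "sum u I = 1"
    unfolding u_def sum_over_section[OF assms] using w(2) .
  moreover have "(\<Sum>i\<in>I. u i *\<^sub>R f i) = 0"
  proof -
    have "(\<Sum>i\<in>I. u i *\<^sub>R f i) = (\<Sum>i\<in>I. if i \<in> inv_into I f ` f ` I then w (f i) *\<^sub>R f i else 0)"
      unfolding u_def by (intro sum.cong) auto
    then show ?thesis using sum_over_section[OF assms, of f "\<lambda>y. w y *\<^sub>R y"] w(3) by simp
  qed
  ultimately show "\<exists>u. (\<forall>i\<in>I. 0 \<le> u i) \<and> 0 < sum u I \<and> (\<Sum>i\<in>I. u i *\<^sub>R f i) = 0"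
    by (intro exI[of _ u]) simp
next
  assume "\<exists>u. (\<forall>i\<in>I. 0 \<le> u i) \<and> 0 < sum u I \<and> (\<Sum>i\<in>I. u i *\<^sub>R f i) = 0"
  then obtain u where u: "\<forall>i\<in>I. 0 \<le> u i" "0 < sum u I" "(\<Sum>i\<in>I. u i *\<^sub>R f i) = 0"
    by blast
  have "(\<Sum>i\<in>I. (u i / sum u I) *\<^sub>R f i) \<in> convex hull (f ` I)"
    using u(1,2) by (intro convex_sum[OF assms convex_convex_hull])
      (auto simp: sum_divide_distrib[symmetric] intro: hull_inc)
  moreover have "(\<Sum>i\<in>I. (u i / sum u I) *\<^sub>R f i) = (1 / sum u I) *\<^sub>R (\<Sum>i\<in>I. u i *\<^sub>R f i)"
    by (simp add: scaleR_sum_right)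
  ultimately show "0 \<in> convex hull (f ` I)" using u(3) by simp
qed

lemma zero_in_convex_hull_insert_image_iff:
  fixes f :: "'i \<Rightarrow> 'a::real_vector"
  assumes "finite I" "j \<notin> I"
  shows "0 \<in> convex hull (insert a (f ` I)) \<longleftrightarrow>
    (\<exists>\<mu> u. 0 \<le> \<mu> \<and> (\<forall>i\<in>I. 0 \<le> u i) \<and> 0 < \<mu> + sum u I \<and> \<mu> *\<^sub>R a + (\<Sum>i\<in>I. u i *\<^sub>R f i) = 0)"
    (is "_ \<longleftrightarrow> (\<exists>\<mu> u. ?P \<mu> u)")
proof -
  define g where "g = f(j := a)"
  have "insert a (f ` I) = g ` insert j I" unfolding g_def using assms(2) by auto
  moreover have sums: "sum u (insert j I) = u j + sum u I"
      "(\<Sum>i\<in>insert j I. u i *\<^sub>R g i) = u j *\<^sub>R a + (\<Sum>i\<in>I. u i *\<^sub>R f i)" for u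
    unfolding g_def using assms by (auto intro!: sum.cong)
  moreover have "(\<exists>u. (\<forall>i\<in>insert j I. 0 \<le> u i) \<and> 0 < sum u (insert j I) \<and>
        (\<Sum>i\<in>insert j I. u i *\<^sub>R g i) = 0) \<longleftrightarrow> (\<exists>\<mu> u. ?P \<mu> u)"
  proof
    assume "\<exists>u. (\<forall>i\<in>insert j I. 0 \<le> u i) \<and> 0 < sum u (insert j I) \<and> (\<Sum>i\<in>insert j I. u i *\<^sub>R g i) = 0"
    then obtain u where "\<forall>i\<in>insert j I. 0 \<le> u i" "0 < sum u (insert j I)"
        "(\<Sum>i\<in>insert j I. u i *\<^sub>R g i) = 0"
      by blast
    then have "?P (u j) u" unfolding sums by simp
    then show "\<exists>\<mu> u. ?P \<mu> u" by blast
  next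
    assume "\<exists>\<mu> u. ?P \<mu> u"
    then obtain \<mu> u where P: "?P \<mu> u" by blast
    have "sum (u(j := \<mu>)) I = sum u I" "(\<Sum>i\<in>I. (u(j := \<mu>)) i *\<^sub>R f i) = (\<Sum>i\<in>I. u i *\<^sub>R f i)"
      using assms(2) by (auto intro!: sum.cong)
    then have "(\<forall>i\<in>insert j I. 0 \<le> (u(j := \<mu>)) i) \<and> 0 < sum (u(j := \<mu>)) (insert j I) \<and>
        (\<Sum>i\<in>insert j I. (u(j := \<mu>)) i *\<^sub>R g i) = 0"
      using P assms(2) unfolding sums by auto
    then show "\<exists>u. (\<forall>i\<in>insert j I. 0 \<le> u i) \<and> 0 < sum u (insert j I) \<and>
        (\<Sum>i\<in>insert j I. u i *\<^sub>R g i) = 0" by blast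
  qed
  ultimately show ?thesis
    using zero_in_convex_hull_image_iff[of "insert j I" g] assms(1) by simp
qed

definition tails :: "nat \<Rightarrow> (nat \<Rightarrow> real) \<Rightarrow> nat \<Rightarrow> real" where
  "tails n u i = (if i \<in> {1..n} then \<Sum>k=i..n. u k else 0)"

lemma sum_scaleR_partial_sums:
  fixes v :: "nat \<Rightarrow> 'a::real_vector"
  shows "(\<Sum>k=1..m. u k *\<^sub>R (\<Sum>i=1..k. v i)) = (\<Sum>i=1..m. (\<Sum>k=i..m. u k) *\<^sub>R v i)"
proof (induction m)
  case (Suc m)
  have "(\<Sum>i=1..m. (\<Sum>k=i..Suc m. u k) *\<^sub>R v i)
      = (\<Sum>i=1..m. (\<Sum>k=i..m. u k) *\<^sub>R v i) + u (Suc m) *\<^sub>R (\<Sum>i=1..m. v i)"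
    by (simp add: scaleR_add_left sum.distrib scaleR_sum_right)
  then show ?case using Suc by (simp add: scaleR_add_right)
qed simp

lemma lincomb_tails: "lincomb n (tails n u) v = (\<Sum>k=1..n. u k *\<^sub>R (\<Sum>i=1..k. v i))"
  unfolding sum_scaleR_partial_sums lincomb_def tails_def by (intro sum.cong) auto

lemma tails_in_Rn: "tails n u \<in> Rn n"
  unfolding tails_def Rn_def by auto

lemma tails_Suc: "i \<in> {1..<n} \<Longrightarrow> tails n u i = u i + tails n u (Suc i)"
  unfolding tails_def by (auto simp: sum.atLeast_Suc_atMost)

lemma tails_last: "1 \<le> n \<Longrightarrow> tails n u n = u n"
  unfolding tails_def by auto

lemma tails_first: "1 \<le> n \<Longrightarrow> tails n u 1 = sum u {1..n}"
  unfolding tails_def by auto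

lemma tails_diffs:
  assumes "x \<in> Rn n" shows "tails n (\<lambda>k. x k - x (Suc k)) = x"
proof
  fix i show "tails n (\<lambda>k. x k - x (Suc k)) i = x i"
  proof (cases "i \<in> {1..n}")
    case True
    have "(\<Sum>k=i..n. x k - x (Suc k)) = - (\<Sum>k=i..n. x (Suc k) - x k)"
      by (simp add: sum_negf[symmetric])
    also have "\<dots> = x i - x (Suc n)" using True by (subst sum_Suc_diff) auto
    finally show ?thesis using True assms unfolding tails_def Rn_def by simp
  next
    case False
    then show ?thesis using assms unfolding tails_def if_not_P[OF False] Rn_def by simp
  qed
qed

lemma antitone_le:
  assumes "\<forall>i\<in>{1..<n}. x (Suc i) \<le> (x i :: real)" "1 \<le> i" "i \<le> j" "j \<le> n"
  shows "x j \<le> x i"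
  using assms(3,4)
proof (induction j rule: dec_induct)
  case (step k)
  then have "x (Suc k) \<le> x k" using assms(1,2) by simp
  then show ?case using step by simp
qed simp

lemma partial_sums_conic_comb_iff:
  assumes "1 \<le> n"
  shows "(\<exists>u. (\<forall>k\<in>{1..n}. 0 \<le> u k) \<and> sum u {1..n} = s \<and> (\<Sum>k=1..n. u k *\<^sub>R (\<Sum>i=1..k. v i)) = w)
     \<longleftrightarrow> (\<exists>y\<in>rev_chamber TypeB n. y 1 = s \<and> lincomb n y v = w)"
proof
  assume "\<exists>u. (\<forall>k\<in>{1..n}. 0 \<le> u k) \<and> sum u {1..n} = s \<and> (\<Sum>k=1..n. u k *\<^sub>R (\<Sum>i=1..k. v i)) = w"
  then obtain u where u: "\<forall>k\<in>{1..n}. 0 \<le> u k" "sum u {1..n} = s"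
      "(\<Sum>k=1..n. u k *\<^sub>R (\<Sum>i=1..k. v i)) = w"
    by blast
  have "tails n u \<in> rev_chamber TypeB n"
    unfolding rev_chamber_def using tails_in_Rn tails_Suc tails_last[OF assms] u(1) assms by fastforce
  then show "\<exists>y\<in>rev_chamber TypeB n. y 1 = s \<and> lincomb n y v = w"
    using tails_first[OF assms] lincomb_tails u(2,3) by blast
next
  assume "\<exists>y\<in>rev_chamber TypeB n. y 1 = s \<and> lincomb n y v = w"
  then obtain y where y: "y \<in> rev_chamber TypeB n" "y 1 = s" "lincomb n y v = w" by blast
  have yR: "y \<in> Rn n" and anti: "\<forall>i\<in>{1..<n}. y (Suc i) \<le> y i" and last: "0 \<le> y n"
    using y(1) unfolding rev_chamber_def by auto
  define u where "u = (\<lambda>k. y k - y (Suc k))"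
  have "0 \<le> u k" if "k \<in> {1..n}" for k
  proof (cases "k = n")
    case True
    then show ?thesis using last yR unfolding u_def Rn_def by simp
  next
    case False
    then show ?thesis using anti that unfolding u_def by simp
  qed
  moreover have "tails n u = y" unfolding u_def using tails_diffs[OF yR] .
  ultimately show "\<exists>u. (\<forall>k\<in>{1..n}. 0 \<le> u k) \<and> sum u {1..n} = s \<and> (\<Sum>k=1..n. u k *\<^sub>R (\<Sum>i=1..k. v i)) = w"
    using tails_first[OF assms, of u] lincomb_tails[of n u v] y(2,3) by (intro exI[of _ u]) simp
qed

lemma nonzero_iff_first_pos:
  assumes "x \<in> Rn n" "\<forall>i\<in>{1..n}. \<bar>x i\<bar> \<le> x 1"
  shows "x \<noteq> (\<lambda>_. 0) \<longleftrightarrow> 0 < x 1"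
proof
  assume "x \<noteq> (\<lambda>_. 0)"
  then obtain i where "x i \<noteq> 0" by auto
  moreover have "i \<in> {1..n}" using assms(1) \<open>x i \<noteq> 0\<close> unfolding Rn_def by blast
  ultimately show "0 < x 1" using assms(2) by fastforce
qed auto

lemma rev_chamber_nonzero_iff:
  assumes "x \<in> rev_chamber t n" "t \<noteq> TypeA" "t = TypeD \<longrightarrow> 2 \<le> n"
  shows "x \<noteq> (\<lambda>_. 0) \<longleftrightarrow> 0 < x 1"
proof (rule nonzero_iff_first_pos)
  have anti: "\<forall>i\<in>{1..<n}. x (Suc i) \<le> x i" using assms(1) unfolding rev_chamber_def by auto
  show "x \<in> Rn n" using assms(1) unfolding rev_chamber_def by auto
  show "\<forall>i\<in>{1..n}. \<bar>x i\<bar> \<le> x 1"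
  proof
    fix i assume i: "i \<in> {1..n}"
    have le1: "x j \<le> x 1" if "j \<in> {1..n}" for j using antitone_le[OF anti, of 1 j] that by auto
    show "\<bar>x i\<bar> \<le> x 1"
    proof (cases t)
      case TypeB
      then have "0 \<le> x n" using assms(1) unfolding rev_chamber_def by auto
      then show ?thesis using antitone_le[OF anti, of i n] i le1[OF i] by auto
    next
      case TypeD
      then have n2: "2 \<le> n" and last: "\<bar>x n\<bar> \<le> x (n - 1)"
        using assms unfolding rev_chamber_def by auto
      have "x (n - 1) \<le> x 1" using le1[of "n - 1"] n2 by auto
      moreover have "x (n - 1) \<le> x i" if "i \<noteq> n"
        using antitone_le[OF anti, of i "n - 1"] i that by auto
      ultimately show ?thesis using le1[OF i] last by (cases "i = n") (auto simp: abs_le_iff)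
    qed (use assms(2) in simp)
  qed
qed

lemma zero_in_hull_partial_sums_iff:
  fixes v :: "nat \<Rightarrow> 'a::real_vector"
  assumes "1 \<le> n"
  shows "0 \<in> convex hull ((\<lambda>k. \<Sum>i=1..k. v i) ` {1..n}) \<longleftrightarrow> v \<in> kernel_meets n (rev_chamber TypeB n)"
proof -
  have "0 \<in> convex hull ((\<lambda>k. \<Sum>i=1..k. v i) ` {1..n}) \<longleftrightarrow>
      (\<exists>s>0. \<exists>u. (\<forall>k\<in>{1..n}. 0 \<le> u k) \<and> sum u {1..n} = s \<and> (\<Sum>k=1..n. u k *\<^sub>R (\<Sum>i=1..k. v i)) = 0)"
    unfolding zero_in_convex_hull_image_iff[OF finite_atLeastAtMost] by blast
  also have "\<dots> \<longleftrightarrow> (\<exists>s>0. \<exists>y\<in>rev_chamber TypeB n. y 1 = s \<and> lincomb n y v = 0)"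
    unfolding partial_sums_conic_comb_iff[OF assms] ..
  also have "\<dots> \<longleftrightarrow> v \<in> kernel_meets n (rev_chamber TypeB n)"
    unfolding kernel_meets_def using rev_chamber_nonzero_iff[of _ TypeB n] by auto
  finally show ?thesis .
qed

definition psum_star_coeffs :: "nat \<Rightarrow> nat \<Rightarrow> real" where
  "psum_star_coeffs n i = (if i \<in> {1..<n} then 1 else if i = n then -1 else 0)"

lemma lincomb_psum_star_coeffs:
  assumes "1 \<le> n"
  shows "lincomb n (psum_star_coeffs n) v = (\<Sum>i=1..n-1. v i) - v n"
proof -
  have split: "{1..n} = insert n {1..n-1}" using assms by auto
  have "lincomb n (psum_star_coeffs n) v
      = psum_star_coeffs n n *\<^sub>R v n + (\<Sum>i=1..n-1. psum_star_coeffs n i *\<^sub>R v i)"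
    unfolding lincomb_def split by (subst sum.insert) auto
  also have "(\<Sum>i=1..n-1. psum_star_coeffs n i *\<^sub>R v i) = (\<Sum>i=1..n-1. v i)"
    unfolding psum_star_coeffs_def by (intro sum.cong) auto
  also have "psum_star_coeffs n n = -1" using assms by (simp add: psum_star_coeffs_def)
  finally show ?thesis by simp
qed

lemma rev_chamber_D_decomp:
  assumes "2 \<le> n"
  shows "x \<in> rev_chamber TypeD n \<longleftrightarrow>
    (\<exists>y\<in>rev_chamber TypeB n. \<exists>\<mu>\<ge>0. x = (\<lambda>i. y i + \<mu> * psum_star_coeffs n i))"
proof
  assume x: "x \<in> rev_chamber TypeD n"
  define \<mu> where "\<mu> = (x (n - 1) - x n) / 2"
  define y where "y = (\<lambda>i. x i - \<mu> * psum_star_coeffs n i)"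
  have last: "\<bar>x n\<bar> \<le> x (n - 1)" using x unfolding rev_chamber_def by simp
  then have "0 \<le> \<mu>" unfolding \<mu>_def by simp
  moreover have "y \<in> rev_chamber TypeB n"
  proof -
    have "y \<in> Rn n" using x assms unfolding y_def psum_star_coeffs_def rev_chamber_def Rn_def by auto
    moreover have "y (Suc i) \<le> y i" if i: "i \<in> {1..<n}" for i
    proof (cases "Suc i = n")
      case True
      then have "i = n - 1" by simp
      then show ?thesis using True i unfolding y_def \<mu>_def psum_star_coeffs_def
        by (simp add: field_simps)
    next
      case False
      then show ?thesis using x i unfolding y_def psum_star_coeffs_def rev_chamber_def by auto
    qed
    moreover have "0 \<le> y n"
      using last assms unfolding y_def \<mu>_def psum_star_coeffs_def by (simp add: abs_le_iff field_simps)
    ultimately show ?thesis unfolding rev_chamber_def by simp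
  qed
  moreover have "x = (\<lambda>i. y i + \<mu> * psum_star_coeffs n i)" unfolding y_def by simp
  ultimately show "\<exists>y\<in>rev_chamber TypeB n. \<exists>\<mu>\<ge>0. x = (\<lambda>i. y i + \<mu> * psum_star_coeffs n i)"
    by blast
next
  assume "\<exists>y\<in>rev_chamber TypeB n. \<exists>\<mu>\<ge>0. x = (\<lambda>i. y i + \<mu> * psum_star_coeffs n i)"
  then obtain y \<mu> where y: "y \<in> rev_chamber TypeB n" and \<mu>: "0 \<le> \<mu>"
    and x: "x = (\<lambda>i. y i + \<mu> * psum_star_coeffs n i)"
    by blast
  have anti: "\<forall>i\<in>{1..<n}. y (Suc i) \<le> y i" and "0 \<le> y n" and "y \<in> Rn n"
    using y unfolding rev_chamber_def by auto
  moreover have "y n \<le> y (n - 1)"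
  proof -
    have "n - 1 \<in> {1..<n}" "Suc (n - 1) = n" using assms by auto
    then show ?thesis using anti by metis
  qed
  ultimately show "x \<in> rev_chamber TypeD n"
    using assms \<mu> unfolding x rev_chamber_def psum_star_coeffs_def Rn_def by auto
qed

lemma zero_in_hull_partial_sums_star_iff:
  fixes v :: "nat \<Rightarrow> 'a::real_vector"
  assumes "2 \<le> n"
  shows "0 \<in> convex hull (insert ((\<Sum>i=1..n-1. v i) - v n) ((\<lambda>k. \<Sum>i=1..k. v i) ` {1..n}))
     \<longleftrightarrow> v \<in> kernel_meets n (rev_chamber TypeD n)"
proof -
  define a where "a = (\<Sum>i=1..n-1. v i) - v n"
  have n1: "1 \<le> n" using assms by simp
  have shift: "lincomb n (\<lambda>i. y i + \<mu> * psum_star_coeffs n i) v = lincomb n y v + \<mu> *\<^sub>R a" for y \<mu>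
    unfolding lincomb_add lincomb_scale lincomb_psum_star_coeffs[OF n1] a_def ..
  have first: "psum_star_coeffs n 1 = 1" using assms by (simp add: psum_star_coeffs_def)
  have "0 \<in> convex hull (insert a ((\<lambda>k. \<Sum>i=1..k. v i) ` {1..n})) \<longleftrightarrow>
      (\<exists>\<mu> u. 0 \<le> \<mu> \<and> (\<forall>k\<in>{1..n}. 0 \<le> u k) \<and> 0 < \<mu> + sum u {1..n} \<and>
        \<mu> *\<^sub>R a + (\<Sum>k=1..n. u k *\<^sub>R (\<Sum>i=1..k. v i)) = 0)"
    by (rule zero_in_convex_hull_insert_image_iff[of _ "Suc n"]) auto
  also have "\<dots> \<longleftrightarrow> (\<exists>\<mu>\<ge>0. \<exists>s. 0 < \<mu> + s \<and> (\<exists>u. (\<forall>k\<in>{1..n}. 0 \<le> u k) \<and> sum u {1..n} = s \<and>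
        (\<Sum>k=1..n. u k *\<^sub>R (\<Sum>i=1..k. v i)) = - (\<mu> *\<^sub>R a)))"
    by (auto simp: add_eq_0_iff)
  also have "\<dots> \<longleftrightarrow> (\<exists>\<mu>\<ge>0. \<exists>s. 0 < \<mu> + s \<and>
        (\<exists>y\<in>rev_chamber TypeB n. y 1 = s \<and> lincomb n y v = - (\<mu> *\<^sub>R a)))"
    unfolding partial_sums_conic_comb_iff[OF n1] ..
  also have "\<dots> \<longleftrightarrow> (\<exists>x\<in>rev_chamber TypeD n. 0 < x 1 \<and> lincomb n x v = 0)"
  proof
    assume "\<exists>\<mu>\<ge>0. \<exists>s. 0 < \<mu> + s \<and> (\<exists>y\<in>rev_chamber TypeB n. y 1 = s \<and> lincomb n y v = - (\<mu> *\<^sub>R a))"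
    then obtain \<mu> y where "0 \<le> \<mu>" "0 < \<mu> + y 1" "y \<in> rev_chamber TypeB n"
        "lincomb n y v = - (\<mu> *\<^sub>R a)"
      by blast
    then show "\<exists>x\<in>rev_chamber TypeD n. 0 < x 1 \<and> lincomb n x v = 0"
      using shift first rev_chamber_D_decomp[OF assms]
      by (intro bexI[of _ "\<lambda>i. y i + \<mu> * psum_star_coeffs n i"]) auto
  next
    assume "\<exists>x\<in>rev_chamber TypeD n. 0 < x 1 \<and> lincomb n x v = 0"
    then obtain x where x: "x \<in> rev_chamber TypeD n" "0 < x 1" "lincomb n x v = 0" by blast
    then obtain y \<mu> where y: "y \<in> rev_chamber TypeB n" "0 \<le> \<mu>"
        "x = (\<lambda>i. y i + \<mu> * psum_star_coeffs n i)"
      using rev_chamber_D_decomp[OF assms] by blast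
    then have "0 < \<mu> + y 1" "lincomb n y v = - (\<mu> *\<^sub>R a)"
      using x(2,3) shift first by (auto simp: add_eq_0_iff2)
    then show "\<exists>\<mu>\<ge>0. \<exists>s. 0 < \<mu> + s \<and> (\<exists>y\<in>rev_chamber TypeB n. y 1 = s \<and> lincomb n y v = - (\<mu> *\<^sub>R a))"
      using y(1,2) by blast
  qed
  also have "\<dots> \<longleftrightarrow> v \<in> kernel_meets n (rev_chamber TypeD n)"
    unfolding kernel_meets_def using rev_chamber_nonzero_iff[of _ TypeD n] assms by auto
  finally show ?thesis unfolding a_def .
qed

lemma rev_chamber_B_shift_mean:
  assumes n: "1 \<le> n" and x: "x \<in> rev_chamber TypeB (n - 1)" "x \<noteq> (\<lambda>_. 0)"
  defines "y \<equiv> (\<lambda>i. if i \<in> {1..n} then x i - (\<Sum>i=1..n. x i) / n else 0)"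
  shows "y \<in> rev_chamber TypeA n" "y \<noteq> (\<lambda>_. 0)"
proof -
  define c where "c = (\<Sum>i=1..n. x i) / n"
  have xR: "x \<in> Rn (n - 1)" and anti: "\<forall>i\<in>{1..<n - 1}. x (Suc i) \<le> x i" and last: "0 \<le> x (n - 1)"
    using x(1) unfolding rev_chamber_def by auto
  have xn: "x n = 0" using xR n unfolding Rn_def by simp
  have "y \<in> Rn n" unfolding y_def Rn_def by simp
  moreover have "y (Suc i) \<le> y i" if "i \<in> {1..<n}" for i
  proof (cases "Suc i = n")
    case True
    then show ?thesis using that last xn unfolding y_def by auto
  next
    case False
    then show ?thesis using that anti unfolding y_def by auto
  qed
  moreover have "(\<Sum>i=1..n. y i) = 0"
    using n unfolding y_def by (simp add: sum_subtractf)
  ultimately show "y \<in> rev_chamber TypeA n" unfolding rev_chamber_def by simp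
  show "y \<noteq> (\<lambda>_. 0)"
  proof
    assume "y = (\<lambda>_. 0)"
    then have const: "x i = c" if "i \<in> {1..n}" for i
      using fun_cong[of y _ i] that unfolding y_def c_def by simp
    then have "c = 0" using xn n by force
    then have "x i = 0" for i
      using const xR Rn_mono[of "n - 1" n] unfolding Rn_def by (cases "i \<in> {1..n}") auto
    then show False using x(2) by blast
  qed
qed

lemma rev_chamber_A_shift_last:
  assumes n: "1 \<le> n" and y: "y \<in> rev_chamber TypeA n" "y \<noteq> (\<lambda>_. 0)"
  defines "x \<equiv> (\<lambda>i. if i \<in> {1..n} then y i - y n else 0)"
  shows "x \<in> rev_chamber TypeB (n - 1)" "x \<noteq> (\<lambda>_. 0)"
proof -
  have yR: "y \<in> Rn n" and anti: "\<forall>i\<in>{1..<n}. y (Suc i) \<le> y i" and sum_y: "(\<Sum>i=1..n. y i) = 0"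
    using y(1) unfolding rev_chamber_def by auto
  have "x i = 0" if "i \<notin> {1..n - 1}" for i
  proof (cases "i = n")
    case False
    then have "i \<notin> {1..n}" using that by auto
    then show ?thesis unfolding x_def by (simp del: atLeastAtMost_iff)
  qed (simp add: x_def)
  then have "x \<in> Rn (n - 1)" unfolding Rn_def by blast
  moreover have "x (Suc i) \<le> x i" if "i \<in> {1..<n - 1}" for i
    using that anti unfolding x_def by auto
  moreover have "0 \<le> x (n - 1)"
  proof (cases "n = 1")
    case False
    then have "n - 1 \<in> {1..<n}" "Suc (n - 1) = n" using n by auto
    then have "y n \<le> y (n - 1)" using anti[rule_format, of "n - 1"] by simp
    moreover have "n - 1 \<in> {1..n}" using False n by auto
    ultimately show ?thesis unfolding x_def by simp
  qed (simp add: x_def)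
  ultimately show "x \<in> rev_chamber TypeB (n - 1)" unfolding rev_chamber_def by simp
  show "x \<noteq> (\<lambda>_. 0)"
  proof
    assume "x = (\<lambda>_. 0)"
    define c where "c = y n"
    then have const: "y i = c" if "i \<in> {1..n}" for i
      using fun_cong[OF \<open>x = (\<lambda>_. 0)\<close>, of i] that unfolding x_def by simp
    then have "real n * c = 0" using sum_y by simp
    then have "c = 0" using n by simp
    have "y i = 0" for i
    proof (cases "i \<in> {1..n}")
      case False
      then show ?thesis using yR unfolding Rn_def by blast
    qed (use const \<open>c = 0\<close> in simp)
    then show False using y(2) by blast
  qed
qed

text \<open>When \<open>\<Sum>i v\<^sub>i = 0\<close>, shifting a kernel vector by a constant keeps it in the kernel; this
  trades the normalization \<open>x\<^sub>n = 0\<close> of the hull of \<open>S\<^sub>1, \<dots>, S\<^sub>n\<^sub>-\<^sub>1\<close> for the condition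
  \<open>\<Sum>i x\<^sub>i = 0\<close> of the chamber of type \<open>A\<close>.\<close>

lemma kernel_meets_rev_chamber_A:
  fixes v :: "nat \<Rightarrow> 'a::real_vector"
  assumes n: "1 \<le> n" and sum_v: "(\<Sum>i=1..n. v i) = 0"
  shows "v \<in> kernel_meets (n - 1) (rev_chamber TypeB (n - 1)) \<longleftrightarrow> v \<in> kernel_meets n (rev_chamber TypeA n)"
proof
  assume "v \<in> kernel_meets (n - 1) (rev_chamber TypeB (n - 1))"
  then obtain x where x: "x \<in> rev_chamber TypeB (n - 1)" "x \<noteq> (\<lambda>_. 0)" "lincomb (n - 1) x v = 0"
    unfolding kernel_meets_def by blast
  have "x n = 0" using x(1) n unfolding rev_chamber_def Rn_def by simp
  then have "lincomb n (\<lambda>i. if i \<in> {1..n} then x i - (\<Sum>i=1..n. x i) / n else 0) v = 0"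
    using lincomb_last_zero[of n x v] n x(3) unfolding lincomb_shift sum_v by simp
  then show "v \<in> kernel_meets n (rev_chamber TypeA n)"
    using rev_chamber_B_shift_mean[OF n x(1,2)] unfolding kernel_meets_def by blast
next
  assume "v \<in> kernel_meets n (rev_chamber TypeA n)"
  then obtain y where y: "y \<in> rev_chamber TypeA n" "y \<noteq> (\<lambda>_. 0)" "lincomb n y v = 0"
    unfolding kernel_meets_def by blast
  let ?x = "\<lambda>i. if i \<in> {1..n} then y i - y n else 0"
  have "lincomb (n - 1) ?x v = 0"
    using lincomb_last_zero[of n ?x v] n y(3) unfolding lincomb_shift sum_v by simp
  then show "v \<in> kernel_meets (n - 1) (rev_chamber TypeB (n - 1))"
    using rev_chamber_A_shift_last[OF n y(1,2)] unfolding kernel_meets_def by blast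
qed

lemma type_assms_dims:
  assumes "type_assms t M n (\<xi> :: nat \<Rightarrow> 'w \<Rightarrow> real^'d)"
  shows "1 \<le> n" "t = TypeD \<longrightarrow> 2 \<le> n" "t = TypeA \<longrightarrow> 2 \<le> n"
proof -
  have bounds: "case t of TypeA \<Rightarrow> n \<ge> CARD('d) + 1 | TypeB \<Rightarrow> n \<ge> CARD('d) | TypeD \<Rightarrow> n \<ge> max 2 CARD('d)"
    using assms unfolding type_assms_def by simp
  have "0 < CARD('d)" by simp
  moreover have "CARD('d) \<le> n" using bounds by (cases t) auto
  ultimately show "1 \<le> n" by linarith
  show "t = TypeD \<longrightarrow> 2 \<le> n" using bounds by (cases t) auto
  show "t = TypeA \<longrightarrow> 2 \<le> n"
  proof
    assume "t = TypeA"
    then have "CARD('d) + 1 \<le> n" using bounds by simp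
    then show "2 \<le> n" using \<open>0 < CARD('d)\<close> by linarith
  qed
qed

lemma measure_zero_in_hull_TypeA:
  fixes \<xi> :: "nat \<Rightarrow> 'w \<Rightarrow> real^'d"
  assumes "type_assms TypeA M n \<xi>"
  shows "measure M {\<omega> \<in> space M. 0 \<in> hull_pts TypeA n \<xi> \<omega>}
       = measure M {\<omega> \<in> space M. (\<lambda>i. \<xi> i \<omega>) \<in> kernel_meets n (rev_chamber TypeA n)}"
proof -
  note n = type_assms_dims[OF assms]
  have meas: "\<forall>i\<in>{1..n}. \<xi> i \<in> borel_measurable M" using assms unfolding type_assms_def by simp
  have "0 \<in> hull_pts TypeA n \<xi> \<omega> \<longleftrightarrow>
      (\<lambda>i. \<xi> i \<omega>) \<in> kernel_meets (n - 1) (rev_chamber TypeB (n - 1))" for \<omega>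
    unfolding hull_pts_def psum_def
    using zero_in_hull_partial_sums_iff[of "n - 1" "\<lambda>i. \<xi> i \<omega>"] n(3) by simp
  then have hull: "{\<omega> \<in> space M. 0 \<in> hull_pts TypeA n \<xi> \<omega>}
      = {\<omega> \<in> space M. (\<lambda>i. \<xi> i \<omega>) \<in> kernel_meets (n - 1) (rev_chamber TypeB (n - 1))}"
    by simp
  have "\<forall>i\<in>{1..n - 1}. \<xi> i \<in> borel_measurable M" using meas by auto
  moreover have "gmap (n - 1) (reversal (n - 1)) (\<lambda>_. 1) ` closed_chamber TypeB (n - 1)
      = rev_chamber TypeB (n - 1)"
    using gmap_reversal_closed_chamber[of "n - 1" TypeB] n(3) by simp
  ultimately have "{\<omega> \<in> space M. (\<lambda>i. \<xi> i \<omega>) \<in> kernel_meets (n - 1) (rev_chamber TypeB (n - 1))}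
      \<in> sets M"
    using sets_kernel_meets_gmap_image[OF _ reversal_permutes _ Rn_closed_cone_closed_chamber,
        of "n - 1" \<xi> M "\<lambda>_. 1" TypeB] by simp
  moreover have "{\<omega> \<in> space M. (\<lambda>i. \<xi> i \<omega>) \<in> kernel_meets n (rev_chamber TypeA n)} \<in> sets M"
    using sets_kernel_meets_gmap_image[OF meas reversal_permutes _ Rn_closed_cone_closed_chamber,
        of "\<lambda>_. 1" TypeA] gmap_reversal_closed_chamber[of n TypeA] n by simp
  moreover have "AE \<omega> in M. (\<lambda>i. \<xi> i \<omega>) \<in> kernel_meets (n - 1) (rev_chamber TypeB (n - 1))
      \<longleftrightarrow> (\<lambda>i. \<xi> i \<omega>) \<in> kernel_meets n (rev_chamber TypeA n)"
  proof (rule AE_mp)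
    show "AE \<omega> in M. psum \<xi> n \<omega> = 0" using assms unfolding type_assms_def by simp
  qed (intro AE_I2 impI, use kernel_meets_rev_chamber_A[OF n(1)] in \<open>simp add: psum_def\<close>)
  ultimately show ?thesis
    unfolding hull by (intro measure_eq_AE) (auto elim!: AE_mp intro!: AE_I2)
qed

lemma measure_zero_in_hull:
  fixes \<xi> :: "nat \<Rightarrow> 'w \<Rightarrow> real^'d"
  assumes "type_assms t M n \<xi>"
  shows "measure M {\<omega> \<in> space M. 0 \<in> hull_pts t n \<xi> \<omega>}
       = measure M {\<omega> \<in> space M. (\<lambda>i. \<xi> i \<omega>) \<in> kernel_meets n (closed_chamber t n)}"
proof -
  note n = type_assms_dims[OF assms]
  have "measure M {\<omega> \<in> space M. 0 \<in> hull_pts t n \<xi> \<omega>}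
      = measure M {\<omega> \<in> space M. (\<lambda>i. \<xi> i \<omega>) \<in> kernel_meets n (rev_chamber t n)}"
  proof (cases t)
    case TypeA
    then show ?thesis using measure_zero_in_hull_TypeA assms by simp
  next
    case TypeB
    have "0 \<in> hull_pts t n \<xi> \<omega> \<longleftrightarrow> (\<lambda>i. \<xi> i \<omega>) \<in> kernel_meets n (rev_chamber t n)" for \<omega>
      unfolding hull_pts_def psum_def TypeB
      using zero_in_hull_partial_sums_iff[OF n(1), of "\<lambda>i. \<xi> i \<omega>"] by simp
    then show ?thesis by simp
  next
    case TypeD
    have "0 \<in> hull_pts t n \<xi> \<omega> \<longleftrightarrow> (\<lambda>i. \<xi> i \<omega>) \<in> kernel_meets n (rev_chamber t n)" for \<omega>
      unfolding hull_pts_def psum_star_def psum_def TypeD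
      using zero_in_hull_partial_sums_star_iff[of n "\<lambda>i. \<xi> i \<omega>"] n(2) TypeD by simp
    then show ?thesis by simp
  qed
  also have "\<dots> = measure M {\<omega> \<in> space M. (\<lambda>i. \<xi> i \<omega>) \<in> kernel_meets n (closed_chamber t n)}"
    using measure_kernel_meets_gmap_image[OF assms reversal_permutes admissible_signs_one
        Rn_closed_cone_closed_chamber[of n t]]
    unfolding gmap_reversal_closed_chamber[OF n(1,2)] .
  finally show ?thesis .
qed

theorem lemma6p1:
  fixes t :: rtype and M :: "'w measure" and n :: nat
    and \<xi> :: "nat \<Rightarrow> 'w \<Rightarrow> real^'d" and g :: "(nat \<Rightarrow> real) \<Rightarrow> (nat \<Rightarrow> real)"
  assumes "type_assms t M n \<xi>"
    and "g \<in> Grp t n"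
  shows "measure M {\<omega> \<in> space M. 0 \<in> hull_pts t n \<xi> \<omega>}
       = measure M {\<omega> \<in> space M. kerA n \<xi> \<omega> \<inter> g ` closure (chamber t n) \<noteq> {\<lambda>_. 0}}"
proof -
  obtain \<sigma> \<epsilon> where g: "g = gmap n \<sigma> \<epsilon>" and \<sigma>: "\<sigma> permutes {1..n}" and \<epsilon>: "admissible_signs t n \<epsilon>"
    using assms(2) unfolding Grp_def by auto
  note n = type_assms_dims[OF assms(1)]
  have "(\<lambda>_. 0) \<in> g ` closed_chamber t n"
    using zero_in_closed_chamber gmap_zero unfolding g by (metis image_eqI)
  moreover have "g ` closed_chamber t n \<subseteq> Rn n" unfolding g using gmap_in_Rn by blast
  ultimately have "kerA n \<xi> \<omega> \<inter> g ` closure (chamber t n) \<noteq> {\<lambda>_. 0}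
      \<longleftrightarrow> (\<lambda>i. \<xi> i \<omega>) \<in> kernel_meets n (g ` closed_chamber t n)" for \<omega>
    unfolding closure_chamber[OF n(1,2)] by (rule kerA_inter_nontrivial_iff)
  then show ?thesis
    unfolding measure_zero_in_hull[OF assms(1)] g
    using measure_kernel_meets_gmap_image[OF assms(1) \<sigma> \<epsilon> Rn_closed_cone_closed_chamber] by simp
qed

end
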